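(* Let $(X_1,\dots,X_M)$ have density $f\in\mathrm{MMEam}$ of the form $f(x_1,\dots,x_M)=\sum_{\mathbf i\in\mathscr S}p_{\mathbf i}f_{i_1}(x_1)\cdots f_{i_M}(x_M)$. For $1\le j\le M$, let $X^{\mathrm{OS}}_{j:M}$ be the $j$-th smallest of $X_1,\dots,X_M$ and $f^{\mathrm{OS}}_{j:M}$ its density. Then $f^{\mathrm{OS}}_{j:M}\in\mathrm{MEam}$ for each $j\in\{1,\dots,M\}$.
   Context: An ME density is a probability density on $[0,\infty)$ of the form $g(x)=\alpha e^{Tx}t$ ($\alpha$ real row vector, $T$ real square matrix, $t$ real column vector). $\mathrm{MEam}$ is the class of nonnegative functions $\sum_{k=1}^K c_kg_k$ with $g_k$ ME densities, $c_k\in\mathbb R$, $\sum c_k=1$. MMEam: fix $L,M\in\mathbb N_+$ and ME densities $f_1,\dots,f_L$. Let $\mathscr S=\{1,\dots,L\}^M$, $\mathbf i=(i_1,\dots,i_M)$, and real numbers $p_{\mathbf i}$ (possibly negative) with $\sum p_{\mathbf i}=1$; $f(x)=\sum_{\mathbf i}p_{\mathbf i}f_{i_1}(x_1)\cdots f_{i_M}(x_M)$ on $[0,\infty)^M$ is an MMEam density if $f\ge0$. *)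

theory Defs
  imports "HOL-Probability.Probability" "Jordan_Normal_Form.Matrix"
begin

definition mat_exp :: "real mat \<Rightarrow> real mat" where
  "mat_exp A = mat (dim_row A) (dim_col A) (\<lambda>(i,j). \<Sum>k. (A ^\<^sub>m k) $$ (i,j) / fact k)"

definition ME_density :: "(real \<Rightarrow> real) \<Rightarrow> bool" where
  "ME_density g \<longleftrightarrow>
     (\<exists>n (\<alpha>::real vec) (T::real mat) (t::real vec).
        \<alpha> \<in> carrier_vec n \<and> T \<in> carrier_mat n n \<and> t \<in> carrier_vec n \<and>
        (\<forall>x\<ge>0. g x = scalar_prod \<alpha> (mult_mat_vec (mat_exp (x \<cdot>\<^sub>m T)) t))) \<and>
     (\<forall>x\<ge>0. g x \<ge> 0) \<and> (g has_integral 1) {0..}"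

definition MEam :: "(real \<Rightarrow> real) \<Rightarrow> bool" where
  "MEam h \<longleftrightarrow> (\<forall>x\<ge>0. h x \<ge> 0) \<and>
     (\<exists>(K::nat) (c::nat \<Rightarrow> real) (g::nat \<Rightarrow> real \<Rightarrow> real).
        (\<forall>k<K. ME_density (g k)) \<and> (\<Sum>k<K. c k) = 1 \<and>
        (\<forall>x\<ge>0. h x = (\<Sum>k<K. c k * g k x)))"

text \<open>Index set S = {1..L}^M, rendered 0-based as functions {..<M} \<rightarrow> {..<L}.\<close>
definition MME_index :: "nat \<Rightarrow> nat \<Rightarrow> (nat \<Rightarrow> nat) set" where
  "MME_index L M = PiE {..<M} (\<lambda>_. {..<L})"

definition MME_fun :: "nat \<Rightarrow> nat \<Rightarrow> (nat \<Rightarrow> real \<Rightarrow> real) \<Rightarrow> ((nat \<Rightarrow> nat) \<Rightarrow> real)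
    \<Rightarrow> (nat \<Rightarrow> real) \<Rightarrow> real" where
  "MME_fun L M F p x = (\<Sum>i\<in>MME_index L M. p i * (\<Prod>m<M. F (i m) (x m)))"

text \<open>j-th smallest (1-based j) among x_0, ..., x_{M-1}.\<close>
definition order_stat :: "nat \<Rightarrow> nat \<Rightarrow> (nat \<Rightarrow> real) \<Rightarrow> real" where
  "order_stat M j x = sort (map x [0..<M]) ! (j - 1)"

end

theory Submission
  imports Defs
begin

(* The central class is exp_poly: functions x \<mapsto> \<Sum>i. a i * u i x where u solves a linear
   system u' = T u with constant coefficients.  An ME density lies in it on [0,\<infinity>), as the
   coordinates of exp(xT) t solve u' = T u; conversely, by uniqueness of solutions every member is
   \<alpha> exp(xT) t, so a member that is nonnegative on [0,\<infinity>) with integral 1 there is an ME density.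
   The class is closed under sums, products (the coordinate products solve the system of the
   Kronecker sum), derivatives and antiderivatives (adjoin one coordinate).

   The j-th order statistic is at most y iff the set S of coordinates at most y has at least j
   elements.  Integrating the product-form density therefore gives the distribution function
   \<Sum>i p_i \<Sum>|S|\<ge>j \<Prod>m\<in>S G_(i_m)(y) \<Prod>m\<notin>S (1 - G_(i_m)(y)), with G_l the distribution
   function of f_l.  Each G_l is in the class, hence so is this distribution function; its
   derivative is the density of the order statistic, which is thus itself an ME density and in
   particular lies in MEam. *)

section \<open>Matrix exponential\<close>

lemma pow_mat_Suc_left:
  assumes "A \<in> carrier_mat n n"
  shows "A ^\<^sub>m Suc k = A * A ^\<^sub>m k"
proof (induction k)
  case 0
  then show ?case using assms by simp
next
  case (Suc k)
  have "A ^\<^sub>m Suc (Suc k) = (A * A ^\<^sub>m k) * A" using Suc by simp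
  also have "\<dots> = A * (A ^\<^sub>m k * A)" using assms by (simp add: assoc_mult_mat[of _ n n _ n _ n])
  finally show ?case by simp
qed

lemma pow_mat_Suc_entry:
  assumes "A \<in> carrier_mat n n" and "i < n" "j < n"
  shows "(A ^\<^sub>m Suc k) $$ (i,j) = (\<Sum>l<n. A $$ (i,l) * (A ^\<^sub>m k) $$ (l,j))"
  using assms by (subst pow_mat_Suc_left[OF assms(1)])
    (simp add: scalar_prod_def lessThan_atLeast0 del: pow_mat.simps)

lemma pow_mat_smult:
  fixes A :: "'a::comm_semiring_1 mat"
  assumes "A \<in> carrier_mat n n"
  shows "(c \<cdot>\<^sub>m A) ^\<^sub>m k = c ^ k \<cdot>\<^sub>m A ^\<^sub>m k"
proof (induction k)
  case 0
  then show ?case using assms by (auto intro!: eq_matI)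
next
  case (Suc k)
  then show ?case
    using assms by (auto intro!: eq_matI sum.cong simp: scalar_prod_def sum_distrib_left mult_ac)
qed

lemma abs_pow_mat_entry_le:
  fixes A :: "real mat"
  assumes "A \<in> carrier_mat n n" and "i < n" "j < n"
  shows "\<bar>(A ^\<^sub>m k) $$ (i,j)\<bar> \<le> (\<Sum>i<n. \<Sum>l<n. \<bar>A $$ (i,l)\<bar>) ^ k"
  using assms(2,3)
proof (induction k arbitrary: i j)
  case 0
  then show ?case using assms by simp
next
  case (Suc k)
  let ?c = "\<Sum>i<n. \<Sum>l<n. \<bar>A $$ (i,l)\<bar>"
  have "\<bar>(A ^\<^sub>m Suc k) $$ (i,j)\<bar> \<le> (\<Sum>l<n. \<bar>A $$ (i,l)\<bar> * ?c ^ k)"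
    unfolding pow_mat_Suc_entry[OF assms(1) Suc.prems]
    by (rule order_trans[OF sum_abs], rule sum_mono)
      (auto simp: abs_mult intro!: mult_left_mono Suc.IH Suc.prems)
  also have "\<dots> = (\<Sum>l<n. \<bar>A $$ (i,l)\<bar>) * ?c ^ k"
    by (simp add: sum_distrib_right)
  also have "\<dots> \<le> ?c * ?c ^ k"
    using Suc.prems by (intro mult_right_mono member_le_sum zero_le_power sum_nonneg) auto
  finally show ?case by simp
qed

lemma mat_exp_carrier: "A \<in> carrier_mat n n \<Longrightarrow> mat_exp A \<in> carrier_mat n n"
  by (simp add: mat_exp_def)

lemma mat_exp_smult_entry:
  fixes A :: "real mat"
  assumes "A \<in> carrier_mat n n" and "i < n" "j < n"
  shows "mat_exp (x \<cdot>\<^sub>m A) $$ (i,j) = (\<Sum>k. (A ^\<^sub>m k) $$ (i,j) / fact k * x ^ k)"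
  using assms unfolding mat_exp_def by (simp add: pow_mat_smult[OF assms(1)] mult_ac)

lemma summable_mat_exp_series:
  fixes A :: "real mat"
  assumes "A \<in> carrier_mat n n" and "i < n" "j < n"
  shows "summable (\<lambda>k. (A ^\<^sub>m k) $$ (i,j) / fact k * x ^ k)"
proof (rule summable_comparison_test)
  let ?c = "\<Sum>i<n. \<Sum>l<n. \<bar>A $$ (i,l)\<bar>"
  have "norm ((A ^\<^sub>m k) $$ (i,j) / fact k * x ^ k) \<le> ?c ^ k * \<bar>x\<bar> ^ k / fact k" for k
    using abs_pow_mat_entry_le[OF assms, of k]
    by (simp add: abs_mult power_abs divide_right_mono mult_right_mono)
  then show "\<exists>N. \<forall>k\<ge>N. norm ((A ^\<^sub>m k) $$ (i,j) / fact k * x ^ k) \<le> (?c * \<bar>x\<bar>) ^ k / fact k"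
    by (simp add: power_mult_distrib)
  show "summable (\<lambda>k. (?c * \<bar>x\<bar>) ^ k / fact k)"
    using summable_exp[of "?c * \<bar>x\<bar>"] by (simp add: inverse_eq_divide)
qed

lemma mat_exp_zero_entry:
  fixes A :: "real mat"
  assumes "A \<in> carrier_mat n n" and "i < n" "j < n"
  shows "mat_exp (0 \<cdot>\<^sub>m A) $$ (i,j) = (if i = j then 1 else 0)"
  using assms powser_zero[of "\<lambda>k. (A ^\<^sub>m k) $$ (i,j) / fact k"]
  by (simp add: mat_exp_smult_entry)

lemma has_real_derivative_mat_exp_entry:
  fixes A :: "real mat"
  assumes A: "A \<in> carrier_mat n n" and ij: "i < n" "j < n"
  shows "((\<lambda>x. mat_exp (x \<cdot>\<^sub>m A) $$ (i,j)) has_real_derivative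
           (\<Sum>l<n. A $$ (i,l) * mat_exp (x \<cdot>\<^sub>m A) $$ (l,j))) (at x)"
proof -
  define c where "c l k = (A ^\<^sub>m k) $$ (l,j) / fact k" for l k
  have series: "mat_exp (x \<cdot>\<^sub>m A) $$ (l,j) = (\<Sum>k. c l k * x ^ k)" if "l < n" for l x
    unfolding c_def using mat_exp_smult_entry[OF A that ij(2)] .
  have summable: "summable (\<lambda>k. c l k * x ^ k)" if "l < n" for l x
    unfolding c_def using summable_mat_exp_series[OF A that ij(2)] .
  have "diffs (c i) k = (\<Sum>l<n. A $$ (i,l) * c l k)" for k
    unfolding diffs_def c_def pow_mat_Suc_entry[OF A ij]
    by (simp add: sum_divide_distrib sum_distrib_left del: of_nat_Suc)
  then have "(\<Sum>k. diffs (c i) k * x ^ k) = (\<Sum>k. \<Sum>l<n. A $$ (i,l) * (c l k * x ^ k))"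
    by (simp add: sum_distrib_left sum_distrib_right mult_ac)
  also have "\<dots> = (\<Sum>l<n. A $$ (i,l) * (\<Sum>k. c l k * x ^ k))"
    using summable by (subst suminf_sum) (auto intro: summable_mult simp: suminf_mult)
  finally have "(\<Sum>k. diffs (c i) k * x ^ k) = (\<Sum>l<n. A $$ (i,l) * mat_exp (x \<cdot>\<^sub>m A) $$ (l,j))"
    by (simp add: series)
  moreover have "((\<lambda>x. \<Sum>k. c i k * x ^ k) has_real_derivative (\<Sum>k. diffs (c i) k * x ^ k)) (at x)"
    by (rule termdiffs_strong_converges_everywhere) (rule summable[OF ij(1)])
  ultimately show ?thesis
    using series[OF ij(1)] by simp
qed

lemma mult_mat_vec_entry:
  assumes "B \<in> carrier_mat n n" "t \<in> carrier_vec n" "i < n"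
  shows "(B *\<^sub>v t) $ i = (\<Sum>j<n. B $$ (i,j) * t $ j)"
  using assms by (simp add: scalar_prod_def lessThan_atLeast0 mult_ac)

lemma scalar_prod_mult_mat_vec:
  assumes "\<alpha> \<in> carrier_vec n" "B \<in> carrier_mat n n" "t \<in> carrier_vec n"
  shows "\<alpha> \<bullet> (B *\<^sub>v t) = (\<Sum>i<n. \<alpha> $ i * (B *\<^sub>v t) $ i)"
  using assms by (simp add: scalar_prod_def lessThan_atLeast0)

lemma mat_exp_zero_mult_vec:
  fixes A :: "real mat"
  assumes "A \<in> carrier_mat n n" "t \<in> carrier_vec n"
  shows "mat_exp (0 \<cdot>\<^sub>m A) *\<^sub>v t = t"
proof (rule eq_vecI)
  fix i assume "i < dim_vec t"
  moreover have "mat_exp (0 \<cdot>\<^sub>m A) \<in> carrier_mat n n"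
    using assms(1) by (simp add: mat_exp_carrier)
  ultimately show "(mat_exp (0 \<cdot>\<^sub>m A) *\<^sub>v t) $ i = t $ i"
    using assms by (subst mult_mat_vec_entry[where n=n])
      (simp_all add: mat_exp_zero_entry if_distrib[of "\<lambda>a. a * _"] cong: if_cong)
qed (use assms in \<open>simp add: mat_exp_def\<close>)

section \<open>Linear differential equations with constant coefficients\<close>

definition linear_ode_solution :: "'i set \<Rightarrow> ('i \<Rightarrow> 'i \<Rightarrow> real) \<Rightarrow> ('i \<Rightarrow> real \<Rightarrow> real) \<Rightarrow> bool" where
  "linear_ode_solution I T u \<longleftrightarrow>
     (\<forall>i\<in>I. \<forall>x. (u i has_real_derivative (\<Sum>j\<in>I. T i j * u j x)) (at x))"

lemma linear_ode_solution_mat_exp: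
  assumes "t \<in> carrier_vec n"
  shows "linear_ode_solution {..<n} T (\<lambda>i x. (mat_exp (x \<cdot>\<^sub>m mat n n (\<lambda>(i,j). T i j)) *\<^sub>v t) $ i)"
proof -
  define A where "A = mat n n (\<lambda>(i,j). T i j)"
  have A: "A \<in> carrier_mat n n" unfolding A_def by simp
  have entry: "(mat_exp (x \<cdot>\<^sub>m A) *\<^sub>v t) $ i = (\<Sum>j<n. mat_exp (x \<cdot>\<^sub>m A) $$ (i,j) * t $ j)"
    if "i < n" for i x
    using that assms by (intro mult_mat_vec_entry mat_exp_carrier) (auto simp: A_def)
  have "((\<lambda>x. (mat_exp (x \<cdot>\<^sub>m A) *\<^sub>v t) $ i) has_real_derivative
          (\<Sum>l<n. T i l * (mat_exp (x \<cdot>\<^sub>m A) *\<^sub>v t) $ l)) (at x)" if "i < n" for i x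
  proof -
    have "((\<lambda>x. \<Sum>j<n. mat_exp (x \<cdot>\<^sub>m A) $$ (i,j) * t $ j) has_real_derivative
            (\<Sum>j<n. (\<Sum>l<n. A $$ (i,l) * mat_exp (x \<cdot>\<^sub>m A) $$ (l,j)) * t $ j)) (at x)"
      using that by (auto intro!: DERIV_sum DERIV_cmult_right has_real_derivative_mat_exp_entry[OF A])
    also have "(\<Sum>j<n. (\<Sum>l<n. A $$ (i,l) * mat_exp (x \<cdot>\<^sub>m A) $$ (l,j)) * t $ j)
        = (\<Sum>l<n. T i l * (\<Sum>j<n. mat_exp (x \<cdot>\<^sub>m A) $$ (l,j) * t $ j))"
      unfolding sum_distrib_left sum_distrib_right
      by (subst sum.swap) (use that in \<open>auto simp: A_def mult_ac intro!: sum.cong\<close>)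
    also have "\<dots> = (\<Sum>l<n. T i l * (mat_exp (x \<cdot>\<^sub>m A) *\<^sub>v t) $ l)"
      by (intro sum.cong refl) (metis entry lessThan_iff)
    finally show ?thesis
      using entry[OF that] by simp
  qed
  then show ?thesis
    unfolding linear_ode_solution_def A_def by simp
qed

lemma gronwall_eq_0_right:
  fixes e :: "real \<Rightarrow> real"
  assumes deriv: "\<And>y. (e has_real_derivative e' y) (at y)"
    and bound: "\<And>y. e' y \<le> K * e y"
    and "e 0 = 0" "\<And>y. 0 \<le> e y" "0 \<le> x"
  shows "e x = 0"
proof -
  define g where "g y = - (e y * exp (- K * y))" for y
  have "(g has_real_derivative - (e' y * exp (- K * y) + e y * (exp (- K * y) * (- K)))) (at y)" for y
    unfolding g_def by (auto intro!: derivative_eq_intros deriv)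
  moreover have "0 \<le> - (e' y * exp (- K * y) + e y * (exp (- K * y) * (- K)))" for y
    using mult_right_mono[OF bound[of y], of "exp (- K * y)"] by (simp add: algebra_simps)
  ultimately have "g 0 \<le> g x"
    using \<open>0 \<le> x\<close> by (intro deriv_nonneg_imp_mono[of 0 x g])
  then show ?thesis
    using assms(3) assms(4)[of x] by (simp add: g_def mult_le_0_iff)
qed

lemma gronwall_eq_0:
  fixes e :: "real \<Rightarrow> real"
  assumes deriv: "\<And>y. (e has_real_derivative e' y) (at y)"
    and bound: "\<And>y. \<bar>e' y\<bar> \<le> K * e y"
    and "e 0 = 0" "\<And>y. 0 \<le> e y"
  shows "e x = 0"
proof (cases "0 \<le> x")
  case True
  have "e' y \<le> K * e y" for y
    using bound[of y] by linarith
  then show ?thesis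
    by (rule gronwall_eq_0_right[OF deriv _ assms(3,4) True])
next
  case False
  have "((\<lambda>y. e (- y)) has_real_derivative - e' (- y)) (at y)" for y
    using DERIV_chain2[OF deriv DERIV_minus[OF DERIV_ident]] by simp
  moreover have "- e' (- y) \<le> K * e (- y)" for y
    using bound[of "- y"] by linarith
  ultimately have "e (- (- x)) = 0"
    by (rule gronwall_eq_0_right) (use assms(3,4) False in auto)
  then show ?thesis by simp
qed

lemma linear_ode_solution_diff:
  assumes "linear_ode_solution I T u" "linear_ode_solution I T v"
  shows "linear_ode_solution I T (\<lambda>i x. u i x - v i x)"
  unfolding linear_ode_solution_def
proof (intro ballI allI)
  fix i x assume "i \<in> I"
  then have "((\<lambda>x. u i x - v i x) has_real_derivative
               (\<Sum>j\<in>I. T i j * u j x) - (\<Sum>j\<in>I. T i j * v j x)) (at x)"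
    using assms unfolding linear_ode_solution_def by (intro DERIV_diff) auto
  then show "((\<lambda>x. u i x - v i x) has_real_derivative (\<Sum>j\<in>I. T i j * (u j x - v j x))) (at x)"
    by (simp add: sum_subtractf right_diff_distrib)
qed

lemma linear_ode_solution_zero:
  assumes "finite I" and w: "linear_ode_solution I T w" and w0: "\<forall>i\<in>I. w i 0 = 0" and "i \<in> I"
  shows "w i x = 0"
proof -
  \<comment> \<open>The energy e = sum of squares satisfies |e'| \<le> 2 c e, so Gronwall forces e = 0.\<close>
  define e where "e y = (\<Sum>i\<in>I. (w i y)\<^sup>2)" for y
  define c where "c = (\<Sum>i\<in>I. \<Sum>j\<in>I. \<bar>T i j\<bar>)"
  define e' where "e' y = (\<Sum>i\<in>I. \<Sum>j\<in>I. 2 * T i j * (w i y * w j y))" for y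
  have "(e has_real_derivative (\<Sum>i\<in>I. 2 * w i y * (\<Sum>j\<in>I. T i j * w j y))) (at y)" for y
    unfolding e_def using w unfolding linear_ode_solution_def
    by (intro DERIV_sum) (auto intro!: derivative_eq_intros)
  then have deriv: "(e has_real_derivative e' y) (at y)" for y
    by (simp add: e'_def sum_distrib_left mult_ac)
  have e_nonneg: "0 \<le> e y" for y
    unfolding e_def by (simp add: sum_nonneg)
  have sq_le: "(w i y)\<^sup>2 \<le> e y" if "i \<in> I" for i y
    unfolding e_def using \<open>finite I\<close> that by (intro member_le_sum) auto
  have sqrt_le: "\<bar>w i y\<bar> \<le> sqrt (e y)" if "i \<in> I" for i y
    using real_sqrt_le_mono[OF sq_le[OF that]] by simp
  have prod_le: "\<bar>w i y\<bar> * \<bar>w j y\<bar> \<le> e y" if "i \<in> I" "j \<in> I" for i j y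
  proof -
    have "\<bar>w i y\<bar> * \<bar>w j y\<bar> \<le> sqrt (e y) * sqrt (e y)"
      using that by (intro mult_mono sqrt_le) (auto simp: e_nonneg)
    also have "\<dots> = e y"
      by (simp add: e_def sum_nonneg)
    finally show ?thesis .
  qed
  have e'_bound: "\<bar>e' y\<bar> \<le> 2 * c * e y" for y
  proof -
    have "\<bar>e' y\<bar> \<le> (\<Sum>i\<in>I. \<Sum>j\<in>I. \<bar>2 * T i j * (w i y * w j y)\<bar>)"
      unfolding e'_def by (rule order_trans[OF sum_abs], rule sum_mono, rule sum_abs)
    also have "\<dots> \<le> (\<Sum>i\<in>I. \<Sum>j\<in>I. 2 * \<bar>T i j\<bar> * e y)"
      by (intro sum_mono) (simp add: abs_mult mult_left_mono prod_le mult.assoc)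
    also have "\<dots> = 2 * c * e y"
      by (simp add: c_def sum_distrib_left sum_distrib_right mult_ac)
    finally show ?thesis .
  qed
  have "e x = 0"
    by (rule gronwall_eq_0[OF deriv e'_bound]) (use e_nonneg w0 in \<open>simp_all add: e_def\<close>)
  then show ?thesis
    using sq_le[OF \<open>i \<in> I\<close>, of x] by simp
qed

lemma linear_ode_solution_unique:
  assumes "finite I" "linear_ode_solution I T u" "linear_ode_solution I T v"
    and "\<forall>i\<in>I. u i 0 = v i 0" "i \<in> I"
  shows "u i x = v i x"
  using linear_ode_solution_zero[OF \<open>finite I\<close> linear_ode_solution_diff[OF assms(2,3)]] assms(4,5)
  by simp

section \<open>Exponential polynomials\<close>

text \<open>These are exactly the real exponential polynomials, whence the name.\<close>
definition exp_poly :: "(real \<Rightarrow> real) \<Rightarrow> bool" where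
  "exp_poly g \<longleftrightarrow> (\<exists>(n::nat) a T u. linear_ode_solution {..<n} T u \<and> g = (\<lambda>x. \<Sum>i<n. a i * u i x))"

lemma exp_polyE:
  assumes "exp_poly g"
  obtains n :: nat and a T u where "linear_ode_solution {..<n} T u" "g = (\<lambda>x. \<Sum>i<n. a i * u i x)"
  using assms unfolding exp_poly_def by blast

lemma exp_polyI:
  fixes u :: "'i \<Rightarrow> real \<Rightarrow> real"
  assumes "finite I" "linear_ode_solution I T u"
  shows "exp_poly (\<lambda>x. \<Sum>i\<in>I. a i * u i x)"
proof -
  obtain f where f: "bij_betw f {..<card I} I"
    using ex_bij_betw_nat_finite[OF assms(1)] by (auto simp: atLeast0LessThan)
  have reindex: "(\<Sum>i\<in>I. h i) = (\<Sum>k<card I. h (f k))" for h :: "'i \<Rightarrow> real"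
    using sum.reindex_bij_betw[OF f, of h] by simp
  have "linear_ode_solution {..<card I} (\<lambda>k l. T (f k) (f l)) (\<lambda>k. u (f k))"
    unfolding linear_ode_solution_def
  proof (intro ballI allI)
    fix k x assume "k \<in> {..<card I}"
    then have "f k \<in> I"
      using bij_betwE[OF f] by blast
    then have "(u (f k) has_real_derivative (\<Sum>j\<in>I. T (f k) j * u j x)) (at x)"
      using assms(2) unfolding linear_ode_solution_def by blast
    then show "(u (f k) has_real_derivative (\<Sum>l\<in>{..<card I}. T (f k) (f l) * u (f l) x)) (at x)"
      using reindex[of "\<lambda>j. T (f k) j * u j x"] by simp
  qed
  moreover have "(\<lambda>x. \<Sum>i\<in>I. a i * u i x) = (\<lambda>x. \<Sum>k<card I. a (f k) * u (f k) x)"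
    by (simp add: reindex)
  ultimately show ?thesis
    unfolding exp_poly_def by (intro exI[of _ "card I"] exI[of _ "\<lambda>k. a (f k)"]) blast
qed

lemma exp_poly_const: "exp_poly (\<lambda>x. c)"
  using exp_polyI[of "{()}" "\<lambda>_ _. 0" "\<lambda>_ _. 1" "\<lambda>_. c"]
  by (simp add: linear_ode_solution_def)

lemma exp_poly_add:
  assumes "exp_poly f" "exp_poly g"
  shows "exp_poly (\<lambda>x. f x + g x)"
proof -
  obtain n1 :: nat and a1 T1 u1 where 1: "linear_ode_solution {..<n1} T1 u1" "f = (\<lambda>x. \<Sum>i<n1. a1 i * u1 i x)"
    by (rule exp_polyE[OF assms(1)])
  obtain n2 :: nat and a2 T2 u2 where 2: "linear_ode_solution {..<n2} T2 u2" "g = (\<lambda>x. \<Sum>i<n2. a2 i * u2 i x)"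
    by (rule exp_polyE[OF assms(2)])
  define T where "T p q = (case (p, q) of
      (Inl i, Inl j) \<Rightarrow> T1 i j | (Inr i, Inr j) \<Rightarrow> T2 i j | _ \<Rightarrow> 0)" for p q
  have "linear_ode_solution ({..<n1} <+> {..<n2}) T (case_sum u1 u2)"
    using 1(1) 2(1) by (auto simp: linear_ode_solution_def sum.Plus T_def)
  from exp_polyI[OF _ this, of "case_sum a1 a2"] show ?thesis
    by (simp add: sum.Plus 1(2) 2(2))
qed

lemma exp_poly_mult:
  assumes "exp_poly f" "exp_poly g"
  shows "exp_poly (\<lambda>x. f x * g x)"
proof -
  obtain n1 :: nat and a1 T1 u1 where 1: "linear_ode_solution {..<n1} T1 u1" "f = (\<lambda>x. \<Sum>i<n1. a1 i * u1 i x)"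
    by (rule exp_polyE[OF assms(1)])
  obtain n2 :: nat and a2 T2 u2 where 2: "linear_ode_solution {..<n2} T2 u2" "g = (\<lambda>x. \<Sum>i<n2. a2 i * u2 i x)"
    by (rule exp_polyE[OF assms(2)])
  \<comment> \<open>The products of coordinates solve the system with the Kronecker sum of the two matrices.\<close>
  define T where "T p q = (if snd p = snd q then T1 (fst p) (fst q) else 0)
      + (if fst p = fst q then T2 (snd p) (snd q) else 0)" for p q
  define u where "u p x = u1 (fst p) x * u2 (snd p) x" for p x
  have "linear_ode_solution ({..<n1} \<times> {..<n2}) T u"
    unfolding linear_ode_solution_def
  proof (intro ballI allI)
    fix p x assume "p \<in> {..<n1} \<times> {..<n2}"
    then obtain i k where p: "p = (i, k)" "i < n1" "k < n2" by auto
    have "(u p has_real_derivative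
        (\<Sum>j<n1. T1 i j * u1 j x) * u2 k x + u1 i x * (\<Sum>l<n2. T2 k l * u2 l x)) (at x)"
      using 1(1) 2(1) p unfolding linear_ode_solution_def u_def
      by (auto intro!: derivative_eq_intros)
    also have "(\<Sum>j<n1. T1 i j * u1 j x) * u2 k x + u1 i x * (\<Sum>l<n2. T2 k l * u2 l x)
        = (\<Sum>j<n1. \<Sum>l<n2. if k = l then T1 i j * (u1 j x * u2 l x) else 0)
          + (\<Sum>l<n2. \<Sum>j<n1. if i = j then T2 k l * (u1 j x * u2 l x) else 0)"
      using p by (simp add: sum_distrib_left sum_distrib_right mult_ac)
    also have "\<dots> = (\<Sum>j<n1. \<Sum>l<n2. T (i, k) (j, l) * u (j, l) x)"
      using p by (subst (2) sum.swap) (simp add: T_def u_def distrib_right sum.distrib if_distrib[of "\<lambda>a. a * _"] cong: if_cong)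
    also have "\<dots> = (\<Sum>q\<in>{..<n1} \<times> {..<n2}. T p q * u q x)"
      by (simp add: sum.cartesian_product' p)
    finally show "(u p has_real_derivative (\<Sum>q\<in>{..<n1} \<times> {..<n2}. T p q * u q x)) (at x)" .
  qed
  from exp_polyI[OF _ this, of "\<lambda>p. a1 (fst p) * a2 (snd p)"] show ?thesis
    by (simp add: 1(2) 2(2) u_def sum_product sum.cartesian_product' mult_ac)
qed

lemma exp_poly_cmult: "exp_poly f \<Longrightarrow> exp_poly (\<lambda>x. c * f x)"
  using exp_poly_mult[OF exp_poly_const] .

lemma exp_poly_diff: "exp_poly f \<Longrightarrow> exp_poly g \<Longrightarrow> exp_poly (\<lambda>x. f x - g x)"
  using exp_poly_add[OF _ exp_poly_cmult[of g "- 1"]] by simp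

lemma exp_poly_sum:
  "finite S \<Longrightarrow> (\<And>s. s \<in> S \<Longrightarrow> exp_poly (f s)) \<Longrightarrow> exp_poly (\<lambda>x. \<Sum>s\<in>S. f s x)"
  by (induction S rule: finite_induct) (auto intro: exp_poly_const exp_poly_add)

lemma exp_poly_prod:
  "finite S \<Longrightarrow> (\<And>s. s \<in> S \<Longrightarrow> exp_poly (f s)) \<Longrightarrow> exp_poly (\<lambda>x. \<Prod>s\<in>S. f s x)"
  by (induction S rule: finite_induct) (auto intro: exp_poly_const exp_poly_mult)

lemma exp_poly_deriv:
  assumes "exp_poly g"
  obtains g' where "exp_poly g'" "\<And>x. (g has_real_derivative g' x) (at x)"
proof -
  obtain n :: nat and a T u where u: "linear_ode_solution {..<n} T u" and g: "g = (\<lambda>x. \<Sum>i<n. a i * u i x)"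
    by (rule exp_polyE[OF assms])
  define g' where "g' x = (\<Sum>j<n. (\<Sum>i<n. a i * T i j) * u j x)" for x
  have "exp_poly g'"
    unfolding g'_def using exp_polyI[OF _ u] by simp
  moreover have "(g has_real_derivative g' x) (at x)" for x
  proof -
    have "(g has_real_derivative (\<Sum>i<n. a i * (\<Sum>j<n. T i j * u j x))) (at x)"
      using u unfolding g linear_ode_solution_def by (auto intro!: DERIV_sum DERIV_cmult)
    also have "(\<Sum>i<n. a i * (\<Sum>j<n. T i j * u j x)) = g' x"
      unfolding g'_def sum_distrib_left sum_distrib_right
      by (subst sum.swap) (simp add: mult_ac)
    finally show ?thesis .
  qed
  ultimately show ?thesis using that by blast
qed

lemma exp_poly_borel_measurable:
  assumes "exp_poly g"
  shows "g \<in> borel_measurable borel"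
proof -
  obtain g' where "\<And>x. (g has_real_derivative g' x) (at x)"
    using exp_poly_deriv[OF assms] by blast
  then have "continuous_on UNIV g"
    by (intro continuous_at_imp_continuous_on) (auto intro: DERIV_isCont)
  then show ?thesis
    by (rule borel_measurable_continuous_onI)
qed

lemma exp_poly_antideriv:
  assumes "exp_poly g"
  obtains G where "exp_poly G" "G 0 = 0" "\<And>x. (G has_real_derivative g x) (at x)"
proof -
  obtain n :: nat and a T u where u: "linear_ode_solution {..<n} T u" and g: "g = (\<lambda>x. \<Sum>i<n. a i * u i x)"
    by (rule exp_polyE[OF assms])
  \<comment> \<open>Adjoin a coordinate with derivative g, started at 0.\<close>
  define T' where "T' i j = (if j < n then if i < n then T i j else a j else 0)" for i j
  define t' where "t' = vec (Suc n) (\<lambda>j. if j < n then u j 0 else 0)"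
  define A where "A = mat (Suc n) (Suc n) (\<lambda>(i,j). T' i j)"
  define v where "v i x = (mat_exp (x \<cdot>\<^sub>m A) *\<^sub>v t') $ i" for i x
  have v: "linear_ode_solution {..<Suc n} T' v"
    unfolding v_def A_def t'_def by (rule linear_ode_solution_mat_exp) simp
  have "mat_exp (0 \<cdot>\<^sub>m A) *\<^sub>v t' = t'"
    by (rule mat_exp_zero_mult_vec) (simp_all add: A_def t'_def)
  then have v0: "v i 0 = t' $ i" for i
    by (simp add: v_def)
  have v_deriv: "(v i has_real_derivative (\<Sum>j<Suc n. T' i j * v j x)) (at x)" if "i \<le> n" for i x
    using v that unfolding linear_ode_solution_def by auto
  have vT: "linear_ode_solution {..<n} T v"
    unfolding linear_ode_solution_def
  proof (intro ballI allI)
    fix i x assume "i \<in> {..<n}"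
    with v_deriv[of i x] show "(v i has_real_derivative (\<Sum>j\<in>{..<n}. T i j * v j x)) (at x)"
      by (simp add: T'_def)
  qed
  have vu: "v i x = u i x" if "i < n" for i x
    using linear_ode_solution_unique[OF _ vT u] v0 that by (simp add: t'_def)
  have "(v n has_real_derivative g x) (at x)" for x
    using v_deriv[of n] vu by (simp add: T'_def g)
  moreover have "v n 0 = 0"
    by (simp add: v0 t'_def)
  moreover have "exp_poly (v n)"
    using exp_polyI[OF _ v, of "\<lambda>i. if i = n then 1 else 0"] by (simp add: if_distrib cong: if_cong)
  ultimately show ?thesis
    using that by blast
qed

section \<open>Matrix-exponential densities\<close>

lemma ME_density_exp_poly:
  assumes "ME_density g"
  obtains e where "exp_poly e" "\<And>x. 0 \<le> x \<Longrightarrow> e x = g x"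
proof -
  obtain n \<alpha> T t where \<alpha>: "\<alpha> \<in> carrier_vec n" and T: "T \<in> carrier_mat n n" and t: "t \<in> carrier_vec n"
    and g: "\<And>x. 0 \<le> x \<Longrightarrow> g x = \<alpha> \<bullet> (mat_exp (x \<cdot>\<^sub>m T) *\<^sub>v t)"
    using assms unfolding ME_density_def by blast
  have "mat n n (\<lambda>(i,j). T $$ (i,j)) = T"
    using T by (auto intro!: eq_matI)
  then have "linear_ode_solution {..<n} (\<lambda>i j. T $$ (i,j)) (\<lambda>i x. (mat_exp (x \<cdot>\<^sub>m T) *\<^sub>v t) $ i)"
    using linear_ode_solution_mat_exp[OF t, of "\<lambda>i j. T $$ (i,j)"] by simp
  moreover have "g x = (\<Sum>i<n. \<alpha> $ i * (mat_exp (x \<cdot>\<^sub>m T) *\<^sub>v t) $ i)" if "0 \<le> x" for x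
  proof -
    have "mat_exp (x \<cdot>\<^sub>m T) \<in> carrier_mat n n"
      using T by (simp add: mat_exp_carrier)
    then show ?thesis
      using g[OF that] scalar_prod_mult_mat_vec[OF \<alpha> _ t] by simp
  qed
  ultimately show ?thesis
    using that exp_polyI[of "{..<n}"] by fastforce
qed

lemma ME_densityI:
  assumes "exp_poly g" "\<And>x. 0 \<le> x \<Longrightarrow> 0 \<le> g x" "(g has_integral 1) {0..}"
  shows "ME_density g"
proof -
  obtain n :: nat and a T u where u: "linear_ode_solution {..<n} T u" and g: "g = (\<lambda>x. \<Sum>i<n. a i * u i x)"
    by (rule exp_polyE[OF assms(1)])
  define A where "A = mat n n (\<lambda>(i,j). T i j)"
  define t where "t = vec n (\<lambda>j. u j 0)"
  have A: "A \<in> carrier_mat n n" and t: "t \<in> carrier_vec n"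
    by (simp_all add: A_def t_def)
  have "(mat_exp (0 \<cdot>\<^sub>m A) *\<^sub>v t) $ i = u i 0" if "i < n" for i
    using mat_exp_zero_mult_vec[OF A t] that by (simp add: t_def)
  then have u_eq: "u i x = (mat_exp (x \<cdot>\<^sub>m A) *\<^sub>v t) $ i" if "i < n" for i x
    using linear_ode_solution_unique[OF _ u linear_ode_solution_mat_exp[OF t]] that
    unfolding A_def by simp
  have "g x = vec n a \<bullet> (mat_exp (x \<cdot>\<^sub>m A) *\<^sub>v t)" for x
  proof -
    have "g x = (\<Sum>i<n. vec n a $ i * (mat_exp (x \<cdot>\<^sub>m A) *\<^sub>v t) $ i)"
      unfolding g by (intro sum.cong refl) (simp only: u_eq lessThan_iff index_vec)
    also have "\<dots> = vec n a \<bullet> (mat_exp (x \<cdot>\<^sub>m A) *\<^sub>v t)"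
      using A t by (intro scalar_prod_mult_mat_vec[symmetric]) (auto simp: mat_exp_carrier)
    finally show ?thesis .
  qed
  then show ?thesis
    unfolding ME_density_def using assms(2,3) A t
    by (intro conjI exI[of _ n] exI[of _ "vec n a"] exI[of _ A] exI[of _ t]) auto
qed

lemma ME_density_imp_MEam: "ME_density h \<Longrightarrow> MEam h"
  unfolding MEam_def
  by (intro conjI exI[of _ 1] exI[of _ "\<lambda>_. 1"] exI[of _ "\<lambda>_. h"]) (auto simp: ME_density_def)

lemma integrable_lborel_has_integral_nonneg:
  fixes f :: "real \<Rightarrow> real"
  assumes "f \<in> borel_measurable borel" "\<And>x. 0 \<le> f x" "(f has_integral I) UNIV"
  shows "integrable lborel f" "integral\<^sup>L lborel f = I"
proof -
  have "(\<integral>\<^sup>+x. ennreal (f x) \<partial>lborel) = ennreal I"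
    using nn_integral_has_integral_lebesgue[of UNIV f I] assms by simp
  moreover have "0 \<le> I"
    using has_integral_nonneg[OF assms(3)] assms(2) by auto
  ultimately show "integrable lborel f" "integral\<^sup>L lborel f = I"
    using assms(1,2) by (auto intro: integrableI_nn_integral_finite simp: integral_eq_nn_integral)
qed

lemma ME_density_integral:
  assumes "ME_density f"
  defines "d \<equiv> \<lambda>x. if 0 \<le> x then f x else 0"
  shows "integrable lborel d" "integral\<^sup>L lborel d = 1"
proof -
  obtain e where "exp_poly e" "\<And>x. 0 \<le> x \<Longrightarrow> e x = f x"
    using ME_density_exp_poly[OF assms(1)] by blast
  then have "d = (\<lambda>x. if 0 \<le> x then e x else 0)"
    by (auto simp: d_def)
  then have "d \<in> borel_measurable borel"
    using exp_poly_borel_measurable[OF \<open>exp_poly e\<close>] by simp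
  moreover have "(d has_integral 1) UNIV"
    using assms(1) has_integral_restrict_UNIV[of "{0..}" f 1]
    by (simp add: ME_density_def d_def atLeast_def)
  ultimately show "integrable lborel d" "integral\<^sup>L lborel d = 1"
    using integrable_lborel_has_integral_nonneg[of d] assms(1) by (auto simp: d_def ME_density_def)
qed

lemma ME_density_cdf:
  assumes "ME_density f"
  obtains G where "exp_poly G" "G 0 = 0"
    "\<And>y. (LINT x:{..y}|lborel. if 0 \<le> x then f x else 0) = (if 0 \<le> y then G y else 0)"
proof -
  obtain e where e: "exp_poly e" "\<And>x. 0 \<le> x \<Longrightarrow> e x = f x"
    using ME_density_exp_poly[OF assms(1)] by blast
  obtain G where G: "exp_poly G" "G 0 = 0" "\<And>x. (G has_real_derivative e x) (at x)"
    using exp_poly_antideriv[OF e(1)] by blast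
  have "(LINT x:{..y}|lborel. if 0 \<le> x then f x else 0) = (if 0 \<le> y then G y else 0)" for y
  proof -
    define g where "g = (\<lambda>x. indicator {..y} x * (if 0 \<le> x then e x else 0))"
    have "g \<in> borel_measurable borel"
      unfolding g_def using exp_poly_borel_measurable[OF e(1)] by measurable
    moreover have "0 \<le> g x" for x
      using assms e(2) by (simp add: g_def ME_density_def)
    moreover have "(g has_integral (if 0 \<le> y then G y else 0)) UNIV"
    proof (cases "0 \<le> y")
      case True
      have "(e has_integral G y - G 0) {0..y}"
        using True G(3) by (intro fundamental_theorem_of_calculus)
          (auto simp: has_real_derivative_iff_has_vector_derivative[symmetric] intro: has_field_derivative_at_within)
      moreover have "g = (\<lambda>x. if x \<in> {0..y} then e x else 0)"
        by (auto simp: g_def indicator_def fun_eq_iff)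
      ultimately show ?thesis
        using True G(2) has_integral_restrict_UNIV[of "{0..y}" e "G y"] by simp
    next
      case False
      then have "g = (\<lambda>_. 0)"
        by (auto simp: g_def indicator_def fun_eq_iff)
      then show ?thesis
        using False by simp
    qed
    ultimately have "integral\<^sup>L lborel g = (if 0 \<le> y then G y else 0)"
      by (rule integrable_lborel_has_integral_nonneg)
    then show ?thesis
      using e(2) by (simp add: g_def set_lebesgue_integral_def cong: if_cong)
  qed
  with G(1,2) that show ?thesis by blast
qed

lemma ME_densities_cdf:
  fixes F :: "nat \<Rightarrow> real \<Rightarrow> real"
  assumes "\<And>l. l < L \<Longrightarrow> ME_density (F l)"
  obtains G where "\<And>l. l < L \<Longrightarrow> exp_poly (G l)" "\<And>l. l < L \<Longrightarrow> G l 0 = 0"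
    "\<And>l y. l < L \<Longrightarrow> (LINT x:{..y}|lborel. if 0 \<le> x then F l x else 0) = (if 0 \<le> y then G l y else 0)"
proof -
  have "\<forall>l\<in>{..<L}. \<exists>G. exp_poly G \<and> G 0 = 0 \<and>
      (\<forall>y. (LINT x:{..y}|lborel. if 0 \<le> x then F l x else 0) = (if 0 \<le> y then G y else 0))"
  proof
    fix l assume "l \<in> {..<L}"
    then show "\<exists>G. exp_poly G \<and> G 0 = 0 \<and>
        (\<forall>y. (LINT x:{..y}|lborel. if 0 \<le> x then F l x else 0) = (if 0 \<le> y then G y else 0))"
      by (auto elim!: ME_density_cdf[OF assms])
  qed
  from bchoice[OF this] show ?thesis
    using that by auto
qed

section \<open>Densities from distribution functions\<close>

lemma measure_eqI_atMost:
  fixes M N :: "real measure"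
  assumes "sets M = sets borel" "sets N = sets borel"
    and "\<And>x. emeasure M {..x} < \<infinity>" "\<And>x. emeasure M {..x} = emeasure N {..x}"
  shows "M = N"
proof (rule measure_eqI_generator_eq[where E = "range atMost" and \<Omega> = UNIV and A = "\<lambda>n. {..real n}"])
  show "Int_stable (range atMost :: real set set)"
    by (auto simp: Int_stable_def)
  show "range atMost \<subseteq> Pow (UNIV :: real set)" "range (\<lambda>n. {..real n}) \<subseteq> range atMost"
    by auto
  show "sets M = sigma_sets UNIV (range atMost)" "sets N = sigma_sets UNIV (range atMost)"
    by (simp_all add: assms(1,2) borel_eq_atMost)
  show "(\<Union>n. {..real n}) = UNIV"
    by (auto intro: real_arch_simple)
qed (use assms(3,4) in \<open>auto simp: less_top\<close>)

lemma deriv_nonneg_if_mono_on_atLeast: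
  fixes H :: "real \<Rightarrow> real"
  assumes "mono_on {a..} H" "(H has_real_derivative D) (at y)" "a \<le> y"
  shows "0 \<le> D"
proof (rule ccontr)
  assume "\<not> 0 \<le> D"
  then obtain \<delta> where "\<delta> > 0" "\<And>t. 0 < t \<Longrightarrow> t < \<delta> \<Longrightarrow> H (y + t) < H y"
    using DERIV_neg_dec_right[OF assms(2)] by force
  then have "H (y + \<delta> / 2) < H y"
    by simp
  moreover have "H y \<le> H (y + \<delta> / 2)"
    using assms(3) \<open>\<delta> > 0\<close> by (auto intro: mono_onD[OF assms(1)])
  ultimately show False
    by simp
qed

lemma emeasure_density_atMost_antideriv:
  fixes H h :: "real \<Rightarrow> real"
  assumes "H 0 = 0" "\<And>y. 0 \<le> y \<Longrightarrow> (H has_real_derivative h y) (at y)"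
    and "\<And>y. 0 \<le> y \<Longrightarrow> 0 \<le> h y" and [measurable]: "h \<in> borel_measurable borel"
  shows "emeasure (density lborel (\<lambda>y. ennreal (if 0 \<le> y then h y else 0))) {..y}
    = ennreal (if 0 \<le> y then H y else 0)"
proof (cases "0 \<le> y")
  case True
  have "emeasure (density lborel (\<lambda>y. ennreal (if 0 \<le> y then h y else 0))) {..y}
      = (\<integral>\<^sup>+x. ennreal (h x) * indicator {0..y} x \<partial>lborel)"
    using assms(4) by (subst emeasure_density) (auto intro!: nn_integral_cong simp: indicator_def)
  also have "\<dots> = ennreal (H y - H 0)"
  proof (rule nn_integral_has_integral_lebesgue')
    show "(h has_integral H y - H 0) {0..y}"
      using True assms(2) by (intro fundamental_theorem_of_calculus)
        (auto simp: has_real_derivative_iff_has_vector_derivative[symmetric] intro: has_field_derivative_at_within)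
  qed (use assms(3) in auto)
  finally show ?thesis
    using True assms(1) by simp
next
  case False
  then show ?thesis
    using assms(4) by (subst emeasure_density) (auto intro!: nn_integral_zero' simp: indicator_def)
qed

lemma distributed_if_cdf_has_real_derivative:
  fixes Y :: "'a \<Rightarrow> real" and H h :: "real \<Rightarrow> real"
  assumes "prob_space P" "Y \<in> borel_measurable P"
    and cdf: "\<And>y. cdf (distr P lborel Y) y = (if 0 \<le> y then H y else 0)"
    and "H 0 = 0" and H: "\<And>y. 0 \<le> y \<Longrightarrow> (H has_real_derivative h y) (at y)"
    and [measurable]: "h \<in> borel_measurable borel"
  shows "distributed P lborel Y (\<lambda>y. ennreal (if 0 \<le> y then h y else 0))"
    and "\<And>y. 0 \<le> y \<Longrightarrow> 0 \<le> h y"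
    and "(h has_integral 1) {0..}"
proof -
  define D where "D = distr P lborel Y"
  interpret D: real_distribution D
    unfolding D_def real_distribution_def real_distribution_axioms_def
    using prob_space.prob_space_distr[OF assms(1), of Y lborel] assms(2) by simp
  have "mono_on {0..} H"
  proof (rule mono_onI)
    fix r s :: real assume "r \<in> {0..}" "s \<in> {0..}" "r \<le> s"
    then show "H r \<le> H s"
      using D.cdf_nondecreasing[of r s] cdf[of r] cdf[of s] by (simp add: D_def)
  qed
  then show h_nonneg: "0 \<le> h y" if "0 \<le> y" for y
    using H[OF that] that by (rule deriv_nonneg_if_mono_on_atLeast)
  define N where "N = density lborel (\<lambda>y. ennreal (if 0 \<le> y then h y else 0))"
  have DN: "D = N"
  proof (rule measure_eqI_atMost)
    show "sets D = sets borel" "sets N = sets borel"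
      by (simp_all add: D_def N_def)
    show "emeasure D {..y} < \<infinity>" for y
      by (simp add: D.emeasure_eq_measure)
    show "emeasure D {..y} = emeasure N {..y}" for y
      using cdf[of y] emeasure_density_atMost_antideriv[OF \<open>H 0 = 0\<close> H h_nonneg assms(6)]
      unfolding D.emeasure_eq_measure by (simp add: cdf_def D_def N_def)
  qed
  then show "distributed P lborel Y (\<lambda>y. ennreal (if 0 \<le> y then h y else 0))"
    unfolding distributed_def using assms(2,6) by (simp add: D_def N_def)
  have "(\<integral>\<^sup>+x. ennreal (if 0 \<le> x then h x else 0) \<partial>lborel) = emeasure N UNIV"
    unfolding N_def by (subst emeasure_density) (use assms(6) in auto)
  also have "\<dots> = ennreal 1"
    using D.emeasure_space_1 unfolding DN by (simp add: N_def)
  finally have "((\<lambda>x. if 0 \<le> x then h x else 0) has_integral 1) UNIV"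
    using h_nonneg assms(6) by (intro nn_integral_has_integral) auto
  then show "(h has_integral 1) {0..}"
    using has_integral_restrict_UNIV[of "{0..}" h 1] by (simp add: atLeast_def)
qed

section \<open>Order statistics\<close>

lemma sorted_nth_le_iff_length_filter:
  fixes xs :: "'a::linorder list"
  assumes "sorted xs" "k < length xs"
  shows "xs ! k \<le> y \<longleftrightarrow> k < length (filter (\<lambda>v. v \<le> y) xs)"
proof -
  define K where "K = {i. i < length xs \<and> xs ! i \<le> y}"
  have len: "length (filter (\<lambda>v. v \<le> y) xs) = card K"
    unfolding K_def by (simp add: length_filter_conv_card)
  have "finite K"
    unfolding K_def by simp
  show ?thesis
  proof
    assume "xs ! k \<le> y"
    then have "{..k} \<subseteq> K"
      using assms by (auto simp: K_def intro: order_trans[OF sorted_nth_mono])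
    from card_mono[OF \<open>finite K\<close> this] show "k < length (filter (\<lambda>v. v \<le> y) xs)"
      by (simp add: len)
  next
    assume "k < length (filter (\<lambda>v. v \<le> y) xs)"
    show "xs ! k \<le> y"
    proof (rule ccontr)
      assume "\<not> xs ! k \<le> y"
      have "K \<subseteq> {..<k}"
      proof
        fix i assume "i \<in> K"
        then have "i < length xs" "xs ! i \<le> y"
          by (auto simp: K_def)
        with \<open>\<not> xs ! k \<le> y\<close> sorted_nth_mono[OF assms(1), of k i] show "i \<in> {..<k}"
          by (meson leI lessThan_iff order_trans)
      qed
      from card_mono[OF _ this] \<open>k < length (filter (\<lambda>v. v \<le> y) xs)\<close> show False
        by (simp add: len)
    qed
  qed
qed

lemma order_stat_le_iff:
  assumes "1 \<le> j" "j \<le> M"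
  shows "order_stat M j x \<le> y \<longleftrightarrow> j \<le> card {m. m < M \<and> x m \<le> y}"
proof -
  have "length (filter (\<lambda>v. v \<le> y) (sort (map x [0..<M]))) = card {m. m < M \<and> x m \<le> y}"
    by (simp add: filter_sort length_filter_conv_card cong: conj_cong)
  then show ?thesis
    using sorted_nth_le_iff_length_filter[of "sort (map x [0..<M])" "j - 1" y] assms
    by (simp add: order_stat_def) arith
qed

lemma order_stat_cong: "(\<And>m. m < M \<Longrightarrow> x m = x' m) \<Longrightarrow> order_stat M j x = order_stat M j x'"
  unfolding order_stat_def by (rule arg_cong[where f = "\<lambda>xs. sort xs ! (j - 1)"], rule map_cong) auto

definition card_ge_subsets :: "nat \<Rightarrow> nat \<Rightarrow> nat set set" where
  "card_ge_subsets M j = {S. S \<subseteq> {..<M} \<and> j \<le> card S}"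

lemma finite_card_ge_subsets: "finite (card_ge_subsets M j)"
  unfolding card_ge_subsets_def by (rule finite_subset[of _ "Pow {..<M}"]) auto

lemma prod_indicator_atMost_greaterThan:
  fixes x :: "nat \<Rightarrow> 'a::linorder"
  assumes "S \<subseteq> {..<M}"
  shows "(\<Prod>m<M. indicator (if m \<in> S then {..y} else {y<..}) (x m) :: real)
    = (if S = {m. m < M \<and> x m \<le> y} then 1 else 0)"
proof (cases "S = {m. m < M \<and> x m \<le> y}")
  case True
  then show ?thesis by (auto intro!: prod.neutral simp: indicator_def not_le)
next
  case False
  then obtain m where "m < M" "m \<in> S \<longleftrightarrow> \<not> x m \<le> y"
    using assms by auto
  then show ?thesis
    using False by (intro trans[OF prod_zero if_not_P[symmetric]] bexI[of _ m]) auto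
qed

lemma indicator_order_stat_le:
  assumes "1 \<le> j" "j \<le> M"
  shows "indicator {x. order_stat M j x \<le> y} x
    = (\<Sum>S\<in>card_ge_subsets M j. \<Prod>m<M. indicator (if m \<in> S then {..y} else {y<..}) (x m) :: real)"
proof -
  have "(\<Sum>S\<in>card_ge_subsets M j. \<Prod>m<M. indicator (if m \<in> S then {..y} else {y<..}) (x m) :: real)
      = (\<Sum>S\<in>card_ge_subsets M j. if {m. m < M \<and> x m \<le> y} = S then 1 else 0)"
    by (intro sum.cong refl) (auto simp: card_ge_subsets_def prod_indicator_atMost_greaterThan)
  also have "\<dots> = (if j \<le> card {m. m < M \<and> x m \<le> y} then 1 else 0)"
    using finite_card_ge_subsets[of M j] by (auto simp: card_ge_subsets_def)
  finally show ?thesis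
    using order_stat_le_iff[OF assms] by (simp add: indicator_def)
qed

lemma order_stat_measurable:
  assumes "1 \<le> j" "j \<le> M"
  shows "order_stat M j \<in> borel_measurable (PiM {..<M} (\<lambda>_. lborel))"
  unfolding borel_measurable_iff_le
proof
  fix y :: real
  let ?P = "PiM {..<M} (\<lambda>_. lborel :: real measure)"
  have "(\<lambda>x. indicator {x. order_stat M j x \<le> y} x :: real) \<in> borel_measurable ?P"
    unfolding indicator_order_stat_le[OF assms]
    by (intro borel_measurable_sum borel_measurable_prod
        measurable_compose[OF measurable_component_singleton borel_measurable_indicator]) auto
  then have "{x \<in> space ?P. (indicator {x. order_stat M j x \<le> y} x :: real) = 1} \<in> sets ?P"
    by measurable
  then show "{x \<in> space ?P. order_stat M j x \<le> y} \<in> sets ?P"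
    by (simp add: indicator_def)
qed

lemma set_integral_greaterThan_eq:
  fixes d :: "real \<Rightarrow> real"
  assumes "integrable lborel d"
  shows "(LINT t:{y<..}|lborel. d t) = integral\<^sup>L lborel d - (LINT t:{..y}|lborel. d t)"
proof -
  have "(\<lambda>t. indicator {y<..} t * d t) = (\<lambda>t. d t - indicator {..y} t * d t)"
    by (auto simp: indicator_def fun_eq_iff)
  moreover have "integrable lborel (\<lambda>t. indicator {..y} t * d t)"
    using integrable_mult_indicator[of "{..y}" lborel d] assms by simp
  ultimately show ?thesis
    using assms by (simp add: set_lebesgue_integral_def)
qed

lemma integral_order_stat_le_prod:
  fixes d :: "nat \<Rightarrow> real \<Rightarrow> real" and y :: real
  assumes "1 \<le> j" "j \<le> M"
    and d: "\<And>m. m < M \<Longrightarrow> integrable lborel (d m)" "\<And>m. m < M \<Longrightarrow> integral\<^sup>L lborel (d m) = 1"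
  defines "C m \<equiv> LINT t:{..y}|lborel. d m t"
  shows "integrable (PiM {..<M} (\<lambda>_. lborel))
           (\<lambda>x. indicator {x. order_stat M j x \<le> y} x * (\<Prod>m<M. d m (x m)))"
    and "(\<integral>x. indicator {x. order_stat M j x \<le> y} x * (\<Prod>m<M. d m (x m)) \<partial>PiM {..<M} (\<lambda>_. lborel))
      = (\<Sum>S\<in>card_ge_subsets M j. \<Prod>m<M. if m \<in> S then C m else 1 - C m)"
proof -
  interpret product_sigma_finite "\<lambda>_::nat. lborel :: real measure"
    by standard
  define side where "side S (m::nat) = (if m \<in> S then {..y} else {y<..})" for S m
  have eq: "indicator {x. order_stat M j x \<le> y} x * (\<Prod>m<M. d m (x m))
      = (\<Sum>S\<in>card_ge_subsets M j. \<Prod>m<M. indicator (side S m) (x m) * d m (x m))" for x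
    unfolding indicator_order_stat_le[OF assms(1,2)] side_def
    by (simp add: sum_distrib_right prod.distrib)
  have factor: "integrable lborel (\<lambda>t. indicator (side S m) t * d m t)"
    "(LINT t|lborel. indicator (side S m) t * d m t) = (if m \<in> S then C m else 1 - C m)"
    if "m < M" for S m
  proof -
    show "integrable lborel (\<lambda>t. indicator (side S m) t * d m t)"
      using integrable_mult_indicator[of "side S m" lborel "d m"] d(1)[OF that]
      by (simp add: side_def)
    show "(LINT t|lborel. indicator (side S m) t * d m t) = (if m \<in> S then C m else 1 - C m)"
      using d(2)[OF that] set_integral_greaterThan_eq[OF d(1)[OF that], of y]
      by (simp add: side_def C_def set_lebesgue_integral_def)
  qed
  have prod: "integrable (PiM {..<M} (\<lambda>_. lborel)) (\<lambda>x. \<Prod>m<M. indicator (side S m) (x m) * d m (x m))"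
    "(\<integral>x. (\<Prod>m<M. indicator (side S m) (x m) * d m (x m)) \<partial>PiM {..<M} (\<lambda>_. lborel))
      = (\<Prod>m<M. if m \<in> S then C m else 1 - C m)" for S
    using product_integrable_prod[of "{..<M}" "\<lambda>m t. indicator (side S m) t * d m t"]
      product_integral_prod[of "{..<M}" "\<lambda>m t. indicator (side S m) t * d m t"] factor
    by auto
  show "integrable (PiM {..<M} (\<lambda>_. lborel))
      (\<lambda>x. indicator {x. order_stat M j x \<le> y} x * (\<Prod>m<M. d m (x m)))"
    unfolding eq by (simp add: prod(1))
  show "(\<integral>x. indicator {x. order_stat M j x \<le> y} x * (\<Prod>m<M. d m (x m)) \<partial>PiM {..<M} (\<lambda>_. lborel))
      = (\<Sum>S\<in>card_ge_subsets M j. \<Prod>m<M. if m \<in> S then C m else 1 - C m)"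
    unfolding eq using prod by (simp add: integral_sum)
qed

section \<open>Order statistics of product-form mixtures\<close>

definition order_stat_cdf ::
    "nat \<Rightarrow> nat \<Rightarrow> nat \<Rightarrow> (nat \<Rightarrow> real \<Rightarrow> real) \<Rightarrow> ((nat \<Rightarrow> nat) \<Rightarrow> real) \<Rightarrow> real \<Rightarrow> real" where
  "order_stat_cdf L M j C p y = (\<Sum>i\<in>MME_index L M. p i *
     (\<Sum>S\<in>card_ge_subsets M j. \<Prod>m<M. if m \<in> S then C (i m) y else 1 - C (i m) y))"

lemma MME_index_less: "i \<in> MME_index L M \<Longrightarrow> m < M \<Longrightarrow> i m < L"
  unfolding MME_index_def by auto

lemma finite_MME_index: "finite (MME_index L M)"
  unfolding MME_index_def by (intro finite_PiE) auto

lemma measure_order_stat_le_MME: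
  fixes d :: "nat \<Rightarrow> real \<Rightarrow> real"
  assumes "1 \<le> j" "j \<le> M"
    and d: "\<And>l. l < L \<Longrightarrow> integrable lborel (d l)" "\<And>l. l < L \<Longrightarrow> integral\<^sup>L lborel (d l) = 1"
    and nonneg: "\<And>x. 0 \<le> MME_fun L M d p x"
  shows "measure (density (PiM {..<M} (\<lambda>_. lborel)) (\<lambda>x. ennreal (MME_fun L M d p x)))
           {x \<in> space (PiM {..<M} (\<lambda>_. lborel)). order_stat M j x \<le> y}
         = order_stat_cdf L M j (\<lambda>l y. LINT t:{..y}|lborel. d l t) p y"
proof -
  let ?P = "PiM {..<M} (\<lambda>_. lborel :: real measure)"
  define A where "A = {x \<in> space ?P. order_stat M j x \<le> y}"
  have A: "A \<in> sets ?P"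
    unfolding A_def using order_stat_measurable[OF assms(1,2)] by measurable
  define g where "g i x = indicator {x. order_stat M j x \<le> y} x * (\<Prod>m<M. d (i m) (x m))" for i x
  have g: "integrable ?P (g i)"
    "integral\<^sup>L ?P (g i) = (\<Sum>S\<in>card_ge_subsets M j. \<Prod>m<M.
       if m \<in> S then LINT t:{..y}|lborel. d (i m) t else 1 - (LINT t:{..y}|lborel. d (i m) t))"
    if "i \<in> MME_index L M" for i
    unfolding g_def using integral_order_stat_le_prod[OF assms(1,2), of "\<lambda>m. d (i m)" y]
      d MME_index_less[OF that] by auto
  have "indicator A x * MME_fun L M d p x = (\<Sum>i\<in>MME_index L M. p i * g i x)" if "x \<in> space ?P" for x
    using that by (simp add: A_def g_def MME_fun_def sum_distrib_left indicator_def mult_ac)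
  then have "integrable ?P (\<lambda>x. indicator A x * MME_fun L M d p x)"
    and int: "integral\<^sup>L ?P (\<lambda>x. indicator A x * MME_fun L M d p x)
      = order_stat_cdf L M j (\<lambda>l y. LINT t:{..y}|lborel. d l t) p y"
    using g by (simp_all cong: Bochner_Integration.integrable_cong Bochner_Integration.integral_cong
        add: integral_sum order_stat_cdf_def)
  moreover have "AE x in ?P. 0 \<le> indicator A x * MME_fun L M d p x"
    using nonneg by simp
  ultimately have "(\<integral>\<^sup>+x. ennreal (indicator A x * MME_fun L M d p x) \<partial>?P)
      = ennreal (order_stat_cdf L M j (\<lambda>l y. LINT t:{..y}|lborel. d l t) p y)"
    by (simp add: nn_integral_eq_integral int)
  moreover have "MME_fun L M d p \<in> borel_measurable ?P"
    unfolding MME_fun_def using d(1) MME_index_less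
    by (intro borel_measurable_sum borel_measurable_times borel_measurable_const borel_measurable_prod
        measurable_compose[OF measurable_component_singleton borel_measurable_integrable]) auto
  ultimately have "emeasure (density ?P (\<lambda>x. ennreal (MME_fun L M d p x))) A
      = ennreal (order_stat_cdf L M j (\<lambda>l y. LINT t:{..y}|lborel. d l t) p y)"
    using A by (simp add: emeasure_density indicator_mult_ennreal mult.commute)
  moreover have "0 \<le> order_stat_cdf L M j (\<lambda>l y. LINT t:{..y}|lborel. d l t) p y"
    unfolding int[symmetric] using nonneg by (simp add: integral_nonneg)
  ultimately show ?thesis
    by (simp add: A_def measure_def)
qed

lemma cdf_order_stat_MME:
  fixes X :: "nat \<Rightarrow> 'a \<Rightarrow> real" and d :: "nat \<Rightarrow> real \<Rightarrow> real"
  assumes "1 \<le> j" "j \<le> M"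
    and d: "\<And>l. l < L \<Longrightarrow> integrable lborel (d l)" "\<And>l. l < L \<Longrightarrow> integral\<^sup>L lborel (d l) = 1"
    and nonneg: "\<And>x. 0 \<le> MME_fun L M d p x"
    and X: "distributed P (PiM {..<M} (\<lambda>_. lborel)) (\<lambda>\<omega>. \<lambda>m\<in>{..<M}. X m \<omega>)
              (\<lambda>x. ennreal (MME_fun L M d p x))"
  defines "Y \<equiv> \<lambda>\<omega>. order_stat M j (\<lambda>m. X m \<omega>)"
  shows "Y \<in> borel_measurable P"
    and "cdf (distr P lborel Y) y = order_stat_cdf L M j (\<lambda>l y. LINT t:{..y}|lborel. d l t) p y"
proof -
  let ?P = "PiM {..<M} (\<lambda>_. lborel :: real measure)"
  define Xv where "Xv \<omega> = (\<lambda>m\<in>{..<M}. X m \<omega>)" for \<omega>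
  have Xv: "Xv \<in> measurable P ?P"
    and distr_Xv: "distr P ?P Xv = density ?P (\<lambda>x. ennreal (MME_fun L M d p x))"
    using X unfolding distributed_def Xv_def by auto
  have os: "order_stat M j \<in> measurable ?P lborel"
    using order_stat_measurable[OF assms(1,2)] by simp
  have Y: "Y = order_stat M j \<circ> Xv"
    unfolding Y_def Xv_def comp_def by (intro ext order_stat_cong) simp
  show "Y \<in> borel_measurable P"
    unfolding Y using os Xv by (simp add: measurable_comp)
  have "distr P lborel Y = distr (density ?P (\<lambda>x. ennreal (MME_fun L M d p x))) lborel (order_stat M j)"
    unfolding Y using distr_distr[OF os Xv] by (simp add: distr_Xv)
  moreover have "order_stat M j \<in> measurable (density ?P (\<lambda>x. ennreal (MME_fun L M d p x))) lborel"
    using os by (simp add: measurable_cong_sets[OF sets_density refl])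
  ultimately have "cdf (distr P lborel Y) y
      = measure (density ?P (\<lambda>x. ennreal (MME_fun L M d p x))) {x \<in> space ?P. order_stat M j x \<le> y}"
    by (simp add: cdf_def measure_distr vimage_def Int_def conj_commute)
  then show "cdf (distr P lborel Y) y = order_stat_cdf L M j (\<lambda>l y. LINT t:{..y}|lborel. d l t) p y"
    using measure_order_stat_le_MME[OF assms(1,2) d nonneg] by simp
qed

lemma exp_poly_order_stat_cdf:
  assumes "\<And>l. l < L \<Longrightarrow> exp_poly (C l)"
  shows "exp_poly (order_stat_cdf L M j C p)"
proof -
  have "exp_poly (\<lambda>y. if m \<in> S then C (i m) y else 1 - C (i m) y)"
    if "i \<in> MME_index L M" "m < M" for i m and S :: "nat set"
    using assms[OF MME_index_less[OF that]] by (cases "m \<in> S") (auto intro: exp_poly_diff exp_poly_const)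
  then show ?thesis
    unfolding order_stat_cdf_def[abs_def]
    by (intro exp_poly_sum exp_poly_cmult exp_poly_prod finite_MME_index finite_card_ge_subsets) auto
qed

lemma order_stat_cdf_cong:
  assumes "\<And>l. l < L \<Longrightarrow> C l y = C' l y"
  shows "order_stat_cdf L M j C p y = order_stat_cdf L M j C' p y"
  unfolding order_stat_cdf_def using assms MME_index_less by (auto intro!: sum.cong prod.cong)

lemma order_stat_cdf_eq_0:
  assumes "1 \<le> j" "\<And>l. l < L \<Longrightarrow> C l y = 0"
  shows "order_stat_cdf L M j C p y = 0"
proof -
  have "(\<Prod>m<M. if m \<in> S then C (i m) y else 1 - C (i m) y) = 0"
    if i: "i \<in> MME_index L M" and S: "S \<in> card_ge_subsets M j" for i S
  proof -
    have "S \<subseteq> {..<M}" "S \<noteq> {}"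
      using S assms(1) by (auto simp: card_ge_subsets_def)
    then obtain m where "m \<in> S" "m < M"
      by blast
    then show ?thesis
      using assms(2) MME_index_less[OF i] by (intro prod_zero bexI[of _ m]) auto
  qed
  then show ?thesis
    unfolding order_stat_cdf_def by (simp del: prod_zero_iff)
qed

lemma MME_fun_restrict:
  "(if \<forall>m<M. 0 \<le> x m then MME_fun L M F p x else 0)
     = MME_fun L M (\<lambda>l t. if 0 \<le> t then F l t else 0) p x"
proof (cases "\<forall>m<M. 0 \<le> x m")
  case True
  then show ?thesis
    unfolding MME_fun_def by simp
next
  case False
  then obtain m where "m < M" "x m < 0"
    by (auto simp: not_le)
  then have "(\<Prod>m<M. if 0 \<le> x m then F (i m) (x m) else 0) = 0" for i
    by (intro prod_zero bexI[of _ m]) auto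
  then show ?thesis
    unfolding MME_fun_def if_not_P[OF False] by (simp del: prod_zero_iff)
qed

lemma cdf_order_stat_exp_poly:
  fixes X :: "nat \<Rightarrow> 'a \<Rightarrow> real"
  assumes ME: "\<And>l. l < L \<Longrightarrow> ME_density (F l)"
    and nonneg: "\<And>x. (\<forall>m<M. 0 \<le> x m) \<Longrightarrow> 0 \<le> MME_fun L M F p x"
    and X: "distributed P (PiM {..<M} (\<lambda>_. lborel)) (\<lambda>\<omega>. \<lambda>m\<in>{..<M}. X m \<omega>)
              (\<lambda>x. ennreal (if \<forall>m<M. 0 \<le> x m then MME_fun L M F p x else 0))"
    and "1 \<le> j" "j \<le> M"
  defines "Y \<equiv> \<lambda>\<omega>. order_stat M j (\<lambda>m. X m \<omega>)"
  obtains H where "exp_poly H" "H 0 = 0" "Y \<in> borel_measurable P"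
    "\<And>y. cdf (distr P lborel Y) y = (if 0 \<le> y then H y else 0)"
proof -
  define d where "d l t = (if 0 \<le> t then F l t else 0)" for l t
  have d: "integrable lborel (d l)" "integral\<^sup>L lborel (d l) = 1" if "l < L" for l
    using ME_density_integral[OF ME[OF that]] by (simp_all add: d_def[abs_def])
  have MME_d: "MME_fun L M d p x = (if \<forall>m<M. 0 \<le> x m then MME_fun L M F p x else 0)" for x
    using MME_fun_restrict[of M x L F p] by (simp add: d_def[abs_def])
  have d_nonneg: "0 \<le> MME_fun L M d p x" for x
    using nonneg by (simp add: MME_d)
  have X_d: "distributed P (PiM {..<M} (\<lambda>_. lborel)) (\<lambda>\<omega>. \<lambda>m\<in>{..<M}. X m \<omega>)
      (\<lambda>x. ennreal (MME_fun L M d p x))"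
    using X by (simp add: MME_d)
  note Y = cdf_order_stat_MME[OF assms(4,5) d d_nonneg X_d]
  show ?thesis
  proof (rule ME_densities_cdf[OF ME])
    fix G assume G: "\<And>l. l < L \<Longrightarrow> exp_poly (G l)" "\<And>l. l < L \<Longrightarrow> G l 0 = 0"
      "\<And>l y. l < L \<Longrightarrow> (LINT t:{..y}|lborel. if 0 \<le> t then F l t else 0) = (if 0 \<le> y then G l y else 0)"
    show thesis
    proof (rule that[of "order_stat_cdf L M j G p"])
      show "exp_poly (order_stat_cdf L M j G p)"
        using G(1) by (rule exp_poly_order_stat_cdf)
      show "order_stat_cdf L M j G p 0 = 0"
        using G(2) assms(4) by (intro order_stat_cdf_eq_0)
      show "Y \<in> borel_measurable P"
        using Y(1) by (simp add: Y_def)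
      show "cdf (distr P lborel Y) y = (if 0 \<le> y then order_stat_cdf L M j G p y else 0)" for y
        using Y(2)[of y] G(3) assms(4)
        by (cases "0 \<le> y") (auto simp: Y_def d_def intro!: order_stat_cdf_cong order_stat_cdf_eq_0)
    qed
  qed
qed

theorem theorem5:
  fixes P :: "'a measure" and X :: "nat \<Rightarrow> 'a \<Rightarrow> real"
    and L M :: nat and F :: "nat \<Rightarrow> real \<Rightarrow> real" and p :: "(nat \<Rightarrow> nat) \<Rightarrow> real"
    and j :: nat
  assumes "prob_space P"
    and "L \<ge> 1" and "M \<ge> 1"
    and "\<And>l. l < L \<Longrightarrow> ME_density (F l)"
    and "(\<Sum>i\<in>MME_index L M. p i) = 1"
    and "\<And>x. (\<forall>m<M. x m \<ge> 0) \<Longrightarrow> MME_fun L M F p x \<ge> 0"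
    and "distributed P (PiM {..<M} (\<lambda>_. lborel)) (\<lambda>\<omega>. \<lambda>m\<in>{..<M}. X m \<omega>)
           (\<lambda>x. ennreal (if (\<forall>m<M. x m \<ge> 0) then MME_fun L M F p x else 0))"
    and "1 \<le> j" and "j \<le> M"
  shows "\<exists>h. MEam h \<and>
           distributed P lborel (\<lambda>\<omega>. order_stat M j (\<lambda>m. X m \<omega>))
             (\<lambda>y. ennreal (if y \<ge> 0 then h y else 0))"
proof -
  obtain H where H: "exp_poly H" "H 0 = 0"
    and Y: "(\<lambda>\<omega>. order_stat M j (\<lambda>m. X m \<omega>)) \<in> borel_measurable P"
      "\<And>y. cdf (distr P lborel (\<lambda>\<omega>. order_stat M j (\<lambda>m. X m \<omega>))) y = (if 0 \<le> y then H y else 0)"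
    using cdf_order_stat_exp_poly[OF assms(4,6,7,8,9)] by metis
  obtain h where h: "exp_poly h" "\<And>y. (H has_real_derivative h y) (at y)"
    using exp_poly_deriv[OF H(1)] by blast
  note h_density = distributed_if_cdf_has_real_derivative[OF assms(1) Y H(2) h(2)
      exp_poly_borel_measurable[OF h(1)]]
  have "ME_density h"
    using h_density(2,3) by (intro ME_densityI h(1))
  then show ?thesis
    using h_density(1) ME_density_imp_MEam by blast
qed

end
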